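(* Let $W=(Y,Z)$ be a random vector with $Y$ real-valued and $\mathbb{E}[Y^2]<\infty$, and let $g_0(Z):=\mathbb{E}[Y\mid Z]$. Let $m(W;g)$ be a moment functional such that $g\mapsto \mathbb{E}[m(W;g)]$ is a continuous linear functional on $\{g:\mathbb{E}[g(Z)^2]<\infty\}$, with Riesz representer $\alpha_0$, i.e. $\alpha_0(Z)$ is square-integrable and $\mathbb{E}[m(W;g)]=\mathbb{E}[\alpha_0(Z)g(Z)]$ for all $g$ with $\mathbb{E}[g(Z)^2]<\infty$. Let $\theta_0:=\mathbb{E}[m(W;g_0)]$, let $A:=\alpha_0(Z)$ and let $h_0(a):=\mathbb{E}[Y\mid A=a]$. Then $$\theta_0=\mathbb{E}[m(W;h_0\circ\alpha_0)]=\mathbb{E}[h_0(\alpha_0(Z))\,\alpha_0(Z)].$$ That is, to estimate $\theta_0$ it suffices to estimate the regression function $h_0\circ\alpha_0$, which conditions only on the value of the Riesz representer.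
   Context: Here $h_0\circ\alpha_0$ denotes the function $z\mapsto h_0(\alpha_0(z))$, which is square-integrable as a function of $Z$ since it is a conditional expectation of the square-integrable $Y$. *)

theory Defs
  imports "HOL-Probability.Probability"
begin

end

theory Submission
  imports Defs
begin

text \<open>
  Both \<open>g\<^sub>0(Z)\<close> and \<open>h\<^sub>0(\<alpha>\<^sub>0(Z))\<close> are conditional expectations of \<open>Y\<close>, given
  \<open>\<sigma>(Z)\<close> and given the coarser \<open>\<sigma>(\<alpha>\<^sub>0(Z))\<close>. The representer \<open>\<alpha>\<^sub>0(Z)\<close> is measurable
  for both \<open>\<sigma>\<close>-algebras and square-integrable, so the defining property of conditional
  expectation gives \<open>E[\<alpha>\<^sub>0(Z) g\<^sub>0(Z)] = E[\<alpha>\<^sub>0(Z) Y] = E[\<alpha>\<^sub>0(Z) h\<^sub>0(\<alpha>\<^sub>0(Z))]\<close>.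
  Both regression functions are square-integrable (Jensen), so the Riesz identity turns the
  outer terms into \<open>E[m(W; g\<^sub>0)]\<close> and \<open>E[m(W; h\<^sub>0 \<circ> \<alpha>\<^sub>0)]\<close>.
\<close>

lemma integrable_mult_of_square_integrable:
  fixes f g :: "'a \<Rightarrow> real"
  assumes f_meas: "f \<in> borel_measurable M" and g_meas: "g \<in> borel_measurable M"
    and f_sq: "integrable M (\<lambda>x. (f x)\<^sup>2)" and g_sq: "integrable M (\<lambda>x. (g x)\<^sup>2)"
  shows "integrable M (\<lambda>x. f x * g x)"
proof (rule Bochner_Integration.integrable_bound)
  show "integrable M (\<lambda>x. (f x)\<^sup>2 + (g x)\<^sup>2)"
    using f_sq g_sq by (rule Bochner_Integration.integrable_add)
  show "(\<lambda>x. f x * g x) \<in> borel_measurable M"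
    using f_meas g_meas by measurable
  have "\<bar>f x * g x\<bar> \<le> (f x)\<^sup>2 + (g x)\<^sup>2" for x
  proof -
    have "2 * \<bar>f x * g x\<bar> \<le> (f x)\<^sup>2 + (g x)\<^sup>2"
      using sum_squares_bound[of "\<bar>f x\<bar>" "\<bar>g x\<bar>"] by (simp add: abs_mult mult.assoc)
    then show ?thesis
      using abs_ge_zero[of "f x * g x"] by linarith
  qed
  then show "AE x in M. norm (f x * g x) \<le> norm ((f x)\<^sup>2 + (g x)\<^sup>2)"
    by simp
qed

lemma subalgebra_vimage_algebra:
  assumes "X \<in> measurable M N"
  shows "subalgebra M (vimage_algebra (space M) X N)"
proof -
  have "X \<in> space M \<rightarrow> space N"
    using assms by (rule measurable_space[THEN funcsetI])
  then show ?thesis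
    using assms by (auto simp: subalgebra_def sets_vimage_algebra2 measurable_sets)
qed

context prob_space
begin

lemma square_integrable_real_cond_exp:
  assumes "subalgebra M F"
    and Y_meas: "Y \<in> borel_measurable M" and Y_sq: "integrable M (\<lambda>x. (Y x)\<^sup>2)"
  shows "integrable M (\<lambda>x. (real_cond_exp M F Y x)\<^sup>2)"
proof -
  interpret finite_measure_subalgebra M F
    by unfold_locales fact
  show ?thesis
    using square_integrable_imp_integrable[OF Y_meas Y_sq] Y_sq
    by (intro integrable_convex_cond_exp[where I = UNIV]) (auto simp: convex_power2)
qed

lemma integral_mult_real_cond_exp:
  assumes "subalgebra M F"
    and f_meas: "f \<in> borel_measurable F" and f_sq: "integrable M (\<lambda>x. (f x)\<^sup>2)"
    and Y_meas: "Y \<in> borel_measurable M" and Y_sq: "integrable M (\<lambda>x. (Y x)\<^sup>2)"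
  shows "(\<integral>x. f x * real_cond_exp M F Y x \<partial>M) = (\<integral>x. f x * Y x \<partial>M)"
proof -
  interpret finite_measure_subalgebra M F
    by unfold_locales fact
  have "f \<in> borel_measurable M"
    using measurable_from_subalg[OF subalg f_meas] .
  then have "integrable M (\<lambda>x. f x * Y x)"
    using Y_meas f_sq Y_sq by (rule integrable_mult_of_square_integrable)
  then show ?thesis
    using f_meas Y_meas by (rule real_cond_exp_intg(2))
qed

lemma square_integrable_regression:
  assumes X_meas: "X \<in> measurable M N" and h_meas: "h \<in> borel_measurable N"
    and h_def: "AE x in M. h (X x) = real_cond_exp M (vimage_algebra (space M) X N) Y x"
    and Y_meas: "Y \<in> borel_measurable M" and Y_sq: "integrable M (\<lambda>x. (Y x)\<^sup>2)"
  shows "integrable M (\<lambda>x. (h (X x))\<^sup>2)"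
proof (rule integrable_cong_AE_imp)
  show "integrable M (\<lambda>x. (real_cond_exp M (vimage_algebra (space M) X N) Y x)\<^sup>2)"
    using subalgebra_vimage_algebra[OF X_meas] Y_meas Y_sq
    by (rule square_integrable_real_cond_exp)
  show "(\<lambda>x. (h (X x))\<^sup>2) \<in> borel_measurable M"
    using X_meas h_meas by measurable
  show "AE x in M. (real_cond_exp M (vimage_algebra (space M) X N) Y x)\<^sup>2 = (h (X x))\<^sup>2"
    using h_def by auto
qed

lemma integral_mult_regression:
  assumes X_meas: "X \<in> measurable M N" and h_meas: "h \<in> borel_measurable N"
    and h_def: "AE x in M. h (X x) = real_cond_exp M (vimage_algebra (space M) X N) Y x"
    and Y_meas: "Y \<in> borel_measurable M" and Y_sq: "integrable M (\<lambda>x. (Y x)\<^sup>2)"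
    and f_meas: "f \<in> borel_measurable N" and f_sq: "integrable M (\<lambda>x. (f (X x))\<^sup>2)"
  shows "(\<integral>x. f (X x) * h (X x) \<partial>M) = (\<integral>x. f (X x) * Y x \<partial>M)"
proof -
  let ?F = "vimage_algebra (space M) X N"
  have X_meas_F: "X \<in> measurable ?F N"
    using X_meas by (intro measurable_vimage_algebra1) (rule measurable_space[THEN funcsetI])
  have "(\<integral>x. f (X x) * h (X x) \<partial>M) = (\<integral>x. f (X x) * real_cond_exp M ?F Y x \<partial>M)"
    using h_def X_meas h_meas f_meas by (intro integral_cong_AE) auto
  also have "\<dots> = (\<integral>x. f (X x) * Y x \<partial>M)"
    using subalgebra_vimage_algebra[OF X_meas] _ f_sq Y_meas Y_sq
    by (rule integral_mult_real_cond_exp) (use X_meas_F f_meas in measurable)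
  finally show ?thesis .
qed

end

theorem lemma1:
  fixes M :: "'a measure" and N :: "'z measure"
    and Y :: "'a \<Rightarrow> real" and Z :: "'a \<Rightarrow> 'z"
    and m :: "real \<times> 'z \<Rightarrow> ('z \<Rightarrow> real) \<Rightarrow> real"
    and g0 :: "'z \<Rightarrow> real" and alpha0 :: "'z \<Rightarrow> real" and h0 :: "real \<Rightarrow> real"
  assumes "prob_space M"
    and Y_meas: "Y \<in> borel_measurable M"
    and Z_meas: "Z \<in> measurable M N"
    and Y_sq: "integrable M (\<lambda>x. (Y x)\<^sup>2)"
    and g0_meas: "g0 \<in> borel_measurable N"
    and g0_def: "AE x in M. g0 (Z x) = real_cond_exp M (vimage_algebra (space M) Z N) Y x"
    and alpha0_meas: "alpha0 \<in> borel_measurable N"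
    and alpha0_sq: "integrable M (\<lambda>x. (alpha0 (Z x))\<^sup>2)"
    and riesz: "\<And>g. g \<in> borel_measurable N \<Longrightarrow> integrable M (\<lambda>x. (g (Z x))\<^sup>2) \<Longrightarrow>
                   integrable M (\<lambda>x. m (Y x, Z x) g) \<and>
                   (\<integral>x. m (Y x, Z x) g \<partial>M) = (\<integral>x. alpha0 (Z x) * g (Z x) \<partial>M)"
    and h0_meas: "h0 \<in> borel_measurable borel"
    and h0_def: "AE x in M. h0 (alpha0 (Z x)) =
                   real_cond_exp M (vimage_algebra (space M) (\<lambda>x. alpha0 (Z x)) borel) Y x"
  shows "(\<integral>x. m (Y x, Z x) g0 \<partial>M) = (\<integral>x. m (Y x, Z x) (h0 \<circ> alpha0) \<partial>M)
       \<and> (\<integral>x. m (Y x, Z x) (h0 \<circ> alpha0) \<partial>M) = (\<integral>x. h0 (alpha0 (Z x)) * alpha0 (Z x) \<partial>M)"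
proof -
  interpret prob_space M by fact
  have A_meas: "(\<lambda>x. alpha0 (Z x)) \<in> measurable M borel"
    using Z_meas alpha0_meas by measurable
  have h0_alpha0_meas: "h0 \<circ> alpha0 \<in> borel_measurable N"
    using alpha0_meas h0_meas by (rule measurable_comp)
  have g0_sq: "integrable M (\<lambda>x. (g0 (Z x))\<^sup>2)"
    using Z_meas g0_meas g0_def Y_meas Y_sq by (rule square_integrable_regression)
  have h0_sq: "integrable M (\<lambda>x. ((h0 \<circ> alpha0) (Z x))\<^sup>2)"
    using square_integrable_regression[OF A_meas h0_meas h0_def Y_meas Y_sq] by simp
  have riesz_h0: "(\<integral>x. m (Y x, Z x) (h0 \<circ> alpha0) \<partial>M) = (\<integral>x. h0 (alpha0 (Z x)) * alpha0 (Z x) \<partial>M)"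
    using riesz[OF h0_alpha0_meas h0_sq] by (simp add: comp_def mult.commute)
  have "(\<integral>x. m (Y x, Z x) g0 \<partial>M) = (\<integral>x. alpha0 (Z x) * g0 (Z x) \<partial>M)"
    using riesz[OF g0_meas g0_sq] by simp
  also have "\<dots> = (\<integral>x. alpha0 (Z x) * Y x \<partial>M)"
    using Z_meas g0_meas g0_def Y_meas Y_sq alpha0_meas alpha0_sq
    by (rule integral_mult_regression)
  also have "\<dots> = (\<integral>x. h0 (alpha0 (Z x)) * alpha0 (Z x) \<partial>M)"
    using integral_mult_regression[OF A_meas h0_meas h0_def Y_meas Y_sq, of "\<lambda>a. a"] alpha0_sq
    by (simp add: mult.commute)
  also have "\<dots> = (\<integral>x. m (Y x, Z x) (h0 \<circ> alpha0) \<partial>M)"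
    using riesz_h0 by simp
  finally show ?thesis
    using riesz_h0 by blast
qed

end
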